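(* Let $s\ge2$ groups of positive integer moduli be given: Group $j$ ($1\le j\le s$) consists of $L_j\ge1$ moduli $0<M_{j,1}<\dots<M_{j,L_j}$; put $\delta_j=\operatorname{lcm}(M_{j,1},\dots,M_{j,L_j})$ and assume $\delta_1,\dots,\delta_s$ pairwise distinct. Let $N$ be an integer with $0\le N<\operatorname{lcm}(\delta_1,\dots,\delta_s)$, let $r_{j,i}$ be the remainder of $N$ modulo $M_{j,i}$ and $n_{j,i}=(N-r_{j,i})/M_{j,i}$. Let $\tilde r_{j,i}$ be integers with $0\le\tilde r_{j,i}\le M_{j,i}-1$ and $|\tilde r_{j,i}-r_{j,i}|\le\tau_j$ for all $i,j$, where $$\tau_j<\min(G_j,G)\quad(1\le j\le s),$$ with $G_j=\max_{1\le i\le L_j}\min_{q\ne i}\gcd(M_{j,i},M_{j,q})/4$ if $L_j\ge2$, $G_j=M_{j,1}/4$ if $L_j=1$, and $G=\max_{1\le i\le s}\min_{q\ne i}\gcd(\delta_i,\delta_q)/4$. Then the two-stage algorithm (described in the context) outputs $\hat n_{j,i}=n_{j,i}$ for all $i,j$, and its estimate $$\hat N=\left[\frac1{\sum_{j=1}^sL_j}\sum_{j=1}^s\sum_{i=1}^{L_j}(\hat n_{j,i}M_{j,i}+\tilde r_{j,i})\right]$$ satisfies $|\hat N-N|\le\left[\frac{\sum_{j=1}^sL_j\tau_j}{\sum_{j=1}^sL_j}\right]$.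
   Context: For $x\in\mathbb R$, $[x]$ denotes the unique integer with $-1/2\le x-[x]<1/2$. Single-stage algorithm $\mathcal A$: for pairwise distinct positive integers $P_1,\dots,P_m$ ($m\ge2$), a reference index $k$ and integers $x_1,\dots,x_m$: for $i\ne k$ put $m_{ki}=\gcd(P_k,P_i)$, $\Gamma_{ki}=P_k/m_{ki}$, $\Gamma_{ik}=P_i/m_{ki}$, $\hat q_{ik}=[(x_i-x_k)/m_{ki}]$, let $\bar\Gamma_{ki}$ be an inverse of $\Gamma_{ki}$ modulo $\Gamma_{ik}$ and $\hat\xi_{ik}\equiv\hat q_{ik}\bar\Gamma_{ki}\pmod{\Gamma_{ik}}$, $0\le\hat\xi_{ik}<\Gamma_{ik}$; let $\hat n_k$ be the least nonnegative $y$ with $y\equiv\hat\xi_{ik}\pmod{\Gamma_{ik}}$ for all $i\ne k$ (the algorithm fails if none exists), and $\hat n_i=(\hat n_k\Gamma_{ki}-\hat q_{ik})/\Gamma_{ik}$ for $i\ne k$. Two-stage algorithm: Stage 1: for each group $j$, if $L_j\ge2$ apply $\mathcal A$ to $M_{j,1},\dots,M_{j,L_j}$ with inputs $\tilde r_{j,1},\dots,\tilde r_{j,L_j}$ and a reference index attaining $\max_i\min_{q\ne i}\gcd(M_{j,i},M_{j,q})$, obtaining $\hat K_{j,1},\dots,\hat K_{j,L_j}$; if $L_j=1$ set $\hat K_{j,1}=0$. Put $\hat N_j=[\frac1{L_j}\sum_{i=1}^{L_j}(\hat K_{j,i}M_{j,i}+\tilde r_{j,i})]$. Stage 2: apply $\mathcal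 A$ to the moduli $\delta_1,\dots,\delta_s$ with inputs $\hat N_1,\dots,\hat N_s$ and a reference index attaining $\max_i\min_{q\ne i}\gcd(\delta_i,\delta_q)$, obtaining $\hat l_1,\dots,\hat l_s$. Output $\hat n_{j,i}=\hat l_j\delta_j/M_{j,i}+\hat K_{j,i}$. *)

theory Defs
  imports Complex_Main "HOL-Number_Theory.Cong"
begin

text \<open>Rounding [x]: the unique integer k with -1/2 \<le> x - k < 1/2, i.e. floor (x + 1/2).\<close>
definition rnd :: "real \<Rightarrow> int" where
  "rnd x = \<lfloor>x + 1/2\<rfloor>"

definition maxmin_gcd :: "nat \<Rightarrow> (nat \<Rightarrow> int) \<Rightarrow> int" where
  "maxmin_gcd m P = Max ((\<lambda>i. Min ((\<lambda>q. gcd (P i) (P q)) ` ({..<m} - {i}))) ` {..<m})"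

definition is_ref_index :: "nat \<Rightarrow> (nat \<Rightarrow> int) \<Rightarrow> nat \<Rightarrow> bool" where
  "is_ref_index m P k \<longleftrightarrow> k < m \<and>
     Min ((\<lambda>q. gcd (P k) (P q)) ` ({..<m} - {k})) = maxmin_gcd m P"

definition alg_A :: "nat \<Rightarrow> (nat \<Rightarrow> int) \<Rightarrow> nat \<Rightarrow> (nat \<Rightarrow> int) \<Rightarrow> (nat \<Rightarrow> int) option" where
  "alg_A m P k x =
    (let mm = (\<lambda>i. gcd (P k) (P i));
         Gki = (\<lambda>i. P k div mm i);
         Gik = (\<lambda>i. P i div mm i);
         q = (\<lambda>i. rnd (real_of_int (x i - x k) / real_of_int (mm i)));
         inv = (\<lambda>i. SOME v. [Gki i * v = 1] (mod Gik i));
         xi = (\<lambda>i. (q i * inv i) mod Gik i);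
         ok = (\<lambda>y::nat. \<forall>i<m. i \<noteq> k \<longrightarrow> [int y = xi i] (mod Gik i))
     in if (\<exists>y. ok y) then
          (let nk = int (LEAST y. ok y)
           in Some (\<lambda>i. if i = k then nk else (nk * Gki i - q i) div Gik i))
        else None)"

definition delta :: "(nat \<Rightarrow> nat) \<Rightarrow> (nat \<Rightarrow> nat \<Rightarrow> int) \<Rightarrow> nat \<Rightarrow> int" where
  "delta L M j = Lcm (M j ` {..<L j})"

definition stage1 :: "(nat \<Rightarrow> nat) \<Rightarrow> (nat \<Rightarrow> nat \<Rightarrow> int) \<Rightarrow> (nat \<Rightarrow> nat \<Rightarrow> int)
    \<Rightarrow> (nat \<Rightarrow> nat) \<Rightarrow> nat \<Rightarrow> (nat \<Rightarrow> int) option" where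
  "stage1 L M rt kg j = (if L j \<ge> 2 then alg_A (L j) (M j) (kg j) (rt j) else Some (\<lambda>_. 0))"

definition Nhat_group :: "(nat \<Rightarrow> nat) \<Rightarrow> (nat \<Rightarrow> nat \<Rightarrow> int) \<Rightarrow> (nat \<Rightarrow> nat \<Rightarrow> int)
    \<Rightarrow> nat \<Rightarrow> (nat \<Rightarrow> int) \<Rightarrow> int" where
  "Nhat_group L M rt j K =
     rnd ((\<Sum>i<L j. real_of_int (K i * M j i + rt j i)) / real (L j))"

definition two_stage :: "nat \<Rightarrow> (nat \<Rightarrow> nat) \<Rightarrow> (nat \<Rightarrow> nat \<Rightarrow> int) \<Rightarrow> (nat \<Rightarrow> nat \<Rightarrow> int)
    \<Rightarrow> (nat \<Rightarrow> nat) \<Rightarrow> nat \<Rightarrow> (nat \<Rightarrow> nat \<Rightarrow> int) option" where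
  "two_stage s L M rt kg k0 =
    (if \<forall>j<s. stage1 L M rt kg j \<noteq> None then
       (let K = (\<lambda>j. the (stage1 L M rt kg j))
        in case alg_A s (delta L M) k0 (\<lambda>j. Nhat_group L M rt j (K j)) of
             None \<Rightarrow> None
           | Some l \<Rightarrow> Some (\<lambda>j i. l j * delta L M j div M j i + K j i))
     else None)"

end

theory Submission
  imports Defs
begin

text \<open>For i \<noteq> k the residues of X modulo P k and P i differ by
  gcd (P k) (P i) * (n_k \<Gamma>_ki - n_i \<Gamma>_ik); if each received residue is off by less
  than a quarter of that gcd, rounding recovers this integer exactly. Hence the true quotient
  n_k solves all congruences y \<equiv> \<xi>_ik (mod \<Gamma>_ik), and it is the least solution because
  X < lcm P forces n_k < lcm \<Gamma>_ik. Stage 1 thus returns the quotients of N mod \<delta>_j, the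
  group averages estimate N mod \<delta>_j with integer error at most \<lfloor>\<tau>_j\<rfloor>, Stage 2 returns
  N div \<delta>_j, and the two quotients combine to N div M_ji. Every term of the final
  average is N plus a residue error, which gives the error bound.\<close>

lemma rnd_of_int [simp]: "rnd (of_int z) = z"
  unfolding rnd_def by linarith

lemma rnd_add_of_int: "rnd (of_int z + a) = z + rnd a"
  unfolding rnd_def by (metis add.assoc add.commute floor_add_int)

lemma rnd_mono: "a \<le> b \<Longrightarrow> rnd a \<le> rnd b"
  unfolding rnd_def by (simp add: floor_mono)

lemma rnd_abs_le:
  assumes "\<bar>a\<bar> \<le> T"
  shows "\<bar>rnd a\<bar> \<le> rnd T"
proof -
  have "rnd a \<le> rnd T" "rnd (- T) \<le> rnd a"
    using assms by (simp_all add: rnd_mono abs_le_iff)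
  moreover have "- rnd T \<le> rnd (- T)"
    unfolding rnd_def by linarith
  ultimately show ?thesis
    by linarith
qed

lemma rnd_divide_near:
  fixes g z e :: int
  assumes "2 * \<bar>e\<bar> < g"
  shows "rnd (of_int (g * z + e) / of_int g) = z"
proof -
  have "0 < g" using assms by linarith
  then have "of_int (g * z + e) / of_int g = of_int z + of_int e / (of_int g :: real)"
    by (simp add: field_simps)
  moreover have "-1/2 \<le> of_int e / (of_int g :: real)" "of_int e / (of_int g :: real) < 1/2"
    using assms \<open>0 < g\<close> by (simp_all add: field_simps abs_less_iff)
  ultimately show ?thesis
    unfolding rnd_def by linarith
qed

lemma rnd_mean_error:
  fixes c E S :: real and X :: int
  assumes "0 < c" and "\<bar>E\<bar> \<le> S"
  shows "\<bar>rnd ((c * of_int X + E) / c) - X\<bar> \<le> rnd (S / c)"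
proof -
  have "(c * of_int X + E) / c = of_int X + E / c"
    using assms(1) by (simp add: field_simps)
  moreover have "\<bar>E / c\<bar> \<le> S / c"
    using assms by (simp add: divide_right_mono)
  ultimately show ?thesis
    using rnd_abs_le by (simp add: rnd_add_of_int)
qed

lemma floor_less_quarter:
  fixes x :: real
  assumes "x < of_int g / 4"
  shows "4 * \<lfloor>x\<rfloor> < g"
proof -
  have "of_int (4 * \<lfloor>x\<rfloor>) < (of_int g :: real)"
    using of_int_floor_le[of x] assms by linarith
  then show ?thesis
    by (simp only: of_int_less_iff)
qed

lemma Lcm_dvd_mult_Lcm_cofactors:
  fixes P :: "'a \<Rightarrow> int"
  shows "Lcm (P ` A) dvd P k * Lcm ((\<lambda>i. P i div gcd (P k) (P i)) ` (A - {k}))"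
proof (rule Lcm_least)
  fix b assume "b \<in> P ` A"
  then obtain i where "i \<in> A" "b = P i" by auto
  show "b dvd P k * Lcm ((\<lambda>i. P i div gcd (P k) (P i)) ` (A - {k}))"
  proof (cases "i = k")
    case False
    have "P k * (P i div gcd (P k) (P i)) = P k div gcd (P k) (P i) * P i"
      by (simp add: div_mult_swap dvd_div_mult)
    then have "P i dvd P k * (P i div gcd (P k) (P i))"
      by simp
    also have "\<dots> dvd P k * Lcm ((\<lambda>i. P i div gcd (P k) (P i)) ` (A - {k}))"
      using \<open>i \<in> A\<close> False by (intro mult_dvd_mono dvd_Lcm) auto
    finally show ?thesis using \<open>b = P i\<close> by simp
  qed (use \<open>b = P i\<close> in simp)
qed

lemma Least_cong_solution:
  fixes c m :: "'a \<Rightarrow> int" and n :: nat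
  assumes sol: "\<forall>i\<in>I. [int n = c i] (mod m i)" and lt: "int n < Lcm (m ` I)"
  shows "(LEAST y::nat. \<forall>i\<in>I. [int y = c i] (mod m i)) = n"
proof -
  define y where "y = (LEAST y::nat. \<forall>i\<in>I. [int y = c i] (mod m i))"
  have y_sol: "\<forall>i\<in>I. [int y = c i] (mod m i)" and "y \<le> n"
    unfolding y_def using sol by (rule LeastI, rule Least_le)
  have "Lcm (m ` I) dvd int n - int y"
  proof (rule Lcm_least)
    fix b assume "b \<in> m ` I"
    then obtain i where "i \<in> I" "b = m i" by blast
    then have "[int n = int y] (mod b)"
      using cong_trans[OF bspec[OF sol] cong_sym[OF bspec[OF y_sol]]] by blast
    then show "b dvd int n - int y"
      by (simp add: cong_iff_dvd_diff)
  qed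
  show ?thesis
    unfolding y_def[symmetric]
  proof (rule ccontr)
    assume "y \<noteq> n"
    then have "0 < int n - int y"
      using \<open>y \<le> n\<close> by linarith
    with \<open>Lcm (m ` I) dvd int n - int y\<close> have "Lcm (m ` I) \<le> int n - int y"
      by (rule zdvd_imp_le)
    then show False
      using lt by linarith
  qed
qed

lemma cong_solution_via_inverse:
  fixes n n' a b q v :: int
  assumes "q = n * a - n' * b" and "[a * v = 1] (mod b)"
  shows "[n = q * v mod b] (mod b)"
proof -
  have "[n * a = q] (mod b)"
    using assms(1) by (simp add: cong_iff_dvd_diff)
  from cong_mult[OF this cong_refl[of v]] have "[n * (a * v) = q * v] (mod b)"
    by (simp add: mult.assoc)
  moreover have "[n * (a * v) = n] (mod b)"
    using cong_mult[OF cong_refl[of n] assms(2)] by simp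
  ultimately show ?thesis
    unfolding cong_def by simp
qed

lemma cong_some_inverse:
  fixes a b :: int
  assumes "coprime a b"
  shows "[a * (SOME v. [a * v = 1] (mod b)) = 1] (mod b)"
proof -
  obtain v where "[a * v = 1] (mod b)"
    using cong_solve_coprime_int[OF assms] by blast
  then show ?thesis
    by (rule someI)
qed

lemma div_gcd_pos:
  fixes a b :: int
  assumes "0 < b"
  shows "0 < b div gcd a b"
proof -
  have "0 < gcd a b"
    using assms by simp
  moreover have "gcd a b \<le> b"
    using assms by (intro zdvd_imp_le) simp_all
  ultimately show ?thesis
    by (simp add: pos_imp_zdiv_pos_iff)
qed

lemma div_less_Lcm_cofactors:
  fixes P :: "nat \<Rightarrow> int"
  assumes "k < m" and P_pos: "\<forall>i<m. 0 < P i" and "X < Lcm (P ` {..<m})"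
  shows "X div P k < Lcm ((\<lambda>i. P i div gcd (P k) (P i)) ` ({..<m} - {k}))"
    (is "_ < Lcm ?G")
proof -
  have Pk: "0 < P k"
    using assms(1) P_pos by blast
  have "0 \<notin> ?G"
  proof
    assume "0 \<in> ?G"
    then obtain i where "i \<in> {..<m} - {k}" "0 = P i div gcd (P k) (P i)"
      by (rule imageE)
    then show False
      using P_pos div_gcd_pos[of "P i" "P k"] by simp
  qed
  then have "Lcm ?G \<noteq> 0"
    by (simp add: Lcm_0_iff)
  then have "0 < Lcm ?G"
    using Lcm_int_greater_eq_0[of ?G] by linarith
  then have "Lcm (P ` {..<m}) \<le> P k * Lcm ?G"
    using Pk by (intro zdvd_imp_le Lcm_dvd_mult_Lcm_cofactors) simp
  moreover have "X div P k * P k \<le> X"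
    using div_mult_mod_eq[of X "P k"] pos_mod_sign[OF Pk, of X] by linarith
  ultimately have "X div P k * P k < P k * Lcm ?G"
    using assms(3) by linarith
  then have "X div P k * P k < Lcm ?G * P k"
    by (metis mult.commute)
  then show ?thesis
    using Pk by (meson less_imp_le mult_right_less_imp_less)
qed

lemma rnd_remainder_difference:
  fixes P Q X xp xq :: int
  defines "g \<equiv> gcd P Q"
  assumes "4 * \<bar>xp - X mod P\<bar> < g" and "4 * \<bar>xq - X mod Q\<bar> < g"
  shows "rnd (of_int (xq - xp) / of_int g) = X div P * (P div g) - X div Q * (Q div g)"
proof -
  define z where "z = X div P * (P div g) - X div Q * (Q div g)"
  have "g * (P div g) = P" "g * (Q div g) = Q"
    unfolding g_def by simp_all
  then have "g * z = X div P * P - X div Q * Q"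
    unfolding z_def by (metis mult.commute mult.left_commute right_diff_distrib)
  also have "\<dots> = X mod Q - X mod P"
    by (simp add: minus_div_mult_eq_mod[symmetric])
  finally have diff: "xq - xp = g * z + ((xq - X mod Q) - (xp - X mod P))"
    by simp
  have "2 * \<bar>(xq - X mod Q) - (xp - X mod P)\<bar> < g"
    using assms(2,3) by (smt (verit))
  from rnd_divide_near[OF this, of z] show ?thesis
    unfolding z_def[symmetric] diff .
qed

lemma div_mult_add_mod_div:
  fixes N d M :: int
  assumes "M dvd d"
  shows "N div d * d div M + N mod d div M = N div M"
proof (cases "M = 0")
  case False
  obtain c where c: "d = M * c"
    using assms by blast
  have "N div d * d div M = N div d * c"
    using False unfolding c by (simp add: mult.left_commute)
  moreover have "N div M = (N mod d + N div d * c * M) div M"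
    using div_mult_mod_eq[of N d] unfolding c by (simp add: algebra_simps)
  ultimately show ?thesis
    using False by simp
qed simp

lemma gcd_le_of_is_ref_index:
  assumes "is_ref_index m P k" and "i < m" and "i \<noteq> k"
  shows "maxmin_gcd m P \<le> gcd (P k) (P i)"
proof -
  have "gcd (P k) (P i) \<in> (\<lambda>q. gcd (P k) (P q)) ` ({..<m} - {k})"
    using assms(2,3) by blast
  then have "Min ((\<lambda>q. gcd (P k) (P q)) ` ({..<m} - {k})) \<le> gcd (P k) (P i)"
    by (intro Min_le) auto
  then show ?thesis
    using assms(1) unfolding is_ref_index_def by simp
qed

lemma alg_A_correct:
  fixes P x :: "nat \<Rightarrow> int" and X g :: int
  assumes k: "k < m" and P_pos: "\<forall>i<m. 0 < P i"
    and g_le: "\<forall>i<m. i \<noteq> k \<longrightarrow> g \<le> gcd (P k) (P i)"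
    and X_range: "0 \<le> X" "X < Lcm (P ` {..<m})"
    and err: "\<forall>i<m. 4 * \<bar>x i - X mod P i\<bar> < g"
  shows "\<exists>n. alg_A m P k x = Some n \<and> (\<forall>i<m. n i = X div P i)"
proof -
  define mm where "mm = (\<lambda>i. gcd (P k) (P i))"
  define Gki where "Gki = (\<lambda>i. P k div mm i)"
  define Gik where "Gik = (\<lambda>i. P i div mm i)"
  define q where "q = (\<lambda>i. rnd (real_of_int (x i - x k) / real_of_int (mm i)))"
  define inv where "inv = (\<lambda>i. SOME v. [Gki i * v = 1] (mod Gik i))"
  define xi where "xi = (\<lambda>i. (q i * inv i) mod Gik i)"
  define ok where "ok = (\<lambda>y::nat. \<forall>i<m. i \<noteq> k \<longrightarrow> [int y = xi i] (mod Gik i))"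
  define I where "I = {..<m} - {k}"
  have ok_iff: "ok = (\<lambda>y. \<forall>i\<in>I. [int y = xi i] (mod Gik i))"
    unfolding ok_def I_def by auto
  define nk where "nk = X div P k"
  have alg: "alg_A m P k x = (if \<exists>y. ok y then
      Some (\<lambda>i. if i = k then int (LEAST y. ok y) else (int (LEAST y. ok y) * Gki i - q i) div Gik i)
      else None)"
    unfolding alg_A_def mm_def Gki_def Gik_def q_def inv_def xi_def ok_def Let_def by (rule refl)
  have Gik_pos: "0 < Gik i" if "i < m" for i
    unfolding Gik_def mm_def using P_pos that by (simp add: div_gcd_pos)
  have q_eq: "q i = nk * Gki i - X div P i * Gik i" if "i \<in> I" for i
  proof -
    have "i < m" "i \<noteq> k" using that unfolding I_def by auto
    then have "4 * \<bar>x k - X mod P k\<bar> < gcd (P k) (P i)" "4 * \<bar>x i - X mod P i\<bar> < gcd (P k) (P i)"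
      using err g_le k by (meson less_le_trans)+
    then show ?thesis
      unfolding q_def Gki_def Gik_def mm_def nk_def by (rule rnd_remainder_difference)
  qed
  have nk_sol: "[nk = xi i] (mod Gik i)" if "i \<in> I" for i
  proof -
    have "[Gki i * inv i = 1] (mod Gik i)"
      unfolding inv_def Gki_def Gik_def mm_def using P_pos k
      by (intro cong_some_inverse div_gcd_coprime) auto
    with q_eq[OF that] show ?thesis
      unfolding xi_def by (rule cong_solution_via_inverse)
  qed
  have "nk < Lcm (Gik ` I)"
    unfolding nk_def Gik_def mm_def I_def using k P_pos X_range(2) by (rule div_less_Lcm_cofactors)
  moreover have nk_nonneg: "0 \<le> nk"
    unfolding nk_def using X_range(1) P_pos k by (simp add: pos_imp_zdiv_nonneg_iff)
  ultimately have least: "(LEAST y. ok y) = nat nk"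
    unfolding ok_iff using nk_sol by (intro Least_cong_solution) auto
  have ok_ex: "\<exists>y. ok y"
    unfolding ok_iff using nk_sol nk_nonneg by (intro exI[of _ "nat nk"]) simp
  define n where "n = (\<lambda>i. if i = k then nk else (nk * Gki i - q i) div Gik i)"
  have "alg_A m P k x = Some n"
    unfolding alg least if_P[OF ok_ex] nat_0_le[OF nk_nonneg] n_def by (rule refl)
  moreover have "n i = X div P i" if "i < m" for i
  proof (cases "i = k")
    case False
    then have "nk * Gki i - q i = X div P i * Gik i"
      using q_eq[of i] that unfolding I_def by simp
    then show ?thesis
      unfolding n_def using False Gik_pos[OF that] by simp
  qed (simp add: n_def nk_def)
  ultimately show ?thesis
    by blast
qed

lemma M_dvd_delta: "i < L j \<Longrightarrow> M j i dvd delta L M j"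
  unfolding delta_def by (rule dvd_Lcm) simp

lemma delta_pos:
  assumes "\<forall>i<L j. 0 < M j i"
  shows "0 < delta L M j"
proof -
  have "delta L M j \<noteq> 0"
    unfolding delta_def using assms by (subst Lcm_0_iff) auto
  then show ?thesis
    unfolding delta_def using Lcm_int_greater_eq_0 by (metis order_le_less)
qed

lemma stage1_correct:
  fixes X :: int
  assumes L: "1 \<le> L j" and M_pos: "\<forall>i<L j. 0 < M j i"
    and X_range: "0 \<le> X" "X < delta L M j"
    and ref: "2 \<le> L j \<Longrightarrow> is_ref_index (L j) (M j) (kg j)"
    and err: "2 \<le> L j \<Longrightarrow> \<forall>i<L j. 4 * \<bar>rt j i - X mod M j i\<bar> < maxmin_gcd (L j) (M j)"
  shows "\<exists>K. stage1 L M rt kg j = Some K \<and> (\<forall>i<L j. K i = X div M j i)"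
proof (cases "2 \<le> L j")
  case True
  have "kg j < L j"
    using ref[OF True] unfolding is_ref_index_def by blast
  then have "\<exists>K. alg_A (L j) (M j) (kg j) (rt j) = Some K \<and> (\<forall>i<L j. K i = X div M j i)"
    using gcd_le_of_is_ref_index[OF ref[OF True]] M_pos X_range err[OF True]
    unfolding delta_def by (intro alg_A_correct) auto
  then show ?thesis
    unfolding stage1_def using True by simp
next
  case False
  then have "L j = 1" using L by linarith
  then have "delta L M j = M j 0"
    unfolding delta_def using M_pos by (simp add: lessThan_Suc)
  then show ?thesis
    unfolding stage1_def using False \<open>L j = 1\<close> X_range by simp
qed

lemma Nhat_group_error:
  fixes X t :: int
  assumes "1 \<le> L j" and K: "\<forall>i<L j. K i = X div M j i"
    and err: "\<forall>i<L j. \<bar>rt j i - X mod M j i\<bar> \<le> t"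
  shows "\<bar>Nhat_group L M rt j K - X\<bar> \<le> t"
proof -
  define e where "e i = rt j i - X mod M j i" for i
  have "(\<Sum>i<L j. real_of_int (K i * M j i + rt j i)) = (\<Sum>i<L j. real_of_int X + real_of_int (e i))"
    using K unfolding e_def by (intro sum.cong) (simp_all add: minus_mod_eq_div_mult[symmetric])
  also have "\<dots> = real (L j) * real_of_int X + (\<Sum>i<L j. real_of_int (e i))"
    by (simp add: sum.distrib)
  finally have sum_eq: "(\<Sum>i<L j. real_of_int (K i * M j i + rt j i))
      = real (L j) * real_of_int X + (\<Sum>i<L j. real_of_int (e i))" .
  have "\<bar>\<Sum>i<L j. real_of_int (e i)\<bar> \<le> (\<Sum>i<L j. \<bar>real_of_int (e i)\<bar>)"
    by (rule sum_abs)
  also have "\<dots> \<le> of_nat (card {..<L j}) * real_of_int t"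
    by (rule sum_bounded_above) (use err in \<open>simp flip: e_def of_int_abs\<close>)
  finally have "\<bar>rnd ((real (L j) * real_of_int X + (\<Sum>i<L j. real_of_int (e i))) / real (L j)) - X\<bar>
      \<le> rnd (real (L j) * real_of_int t / real (L j))"
    using assms(1) by (intro rnd_mean_error) auto
  then show ?thesis
    unfolding Nhat_group_def sum_eq using assms(1) by simp
qed

lemma two_stage_correct:
  fixes t :: "nat \<Rightarrow> int"
  assumes L_pos: "\<forall>j<s. 1 \<le> L j" and M_pos: "\<forall>j<s. \<forall>i<L j. 0 < M j i"
    and N_range: "0 \<le> N" "N < Lcm (delta L M ` {..<s})"
    and err: "\<forall>j<s. \<forall>i<L j. \<bar>rt j i - N mod M j i\<bar> \<le> t j"
    and t_group: "\<forall>j<s. 2 \<le> L j \<longrightarrow> 4 * t j < maxmin_gcd (L j) (M j)"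
    and t_delta: "\<forall>j<s. 4 * t j < maxmin_gcd s (delta L M)"
    and kg_ref: "\<forall>j<s. 2 \<le> L j \<longrightarrow> is_ref_index (L j) (M j) (kg j)"
    and k0_ref: "is_ref_index s (delta L M) k0"
  shows "\<exists>nhat. two_stage s L M rt kg k0 = Some nhat
    \<and> (\<forall>j<s. \<forall>i<L j. nhat j i = N div M j i)"
proof -
  define d where "d = delta L M"
  have d_pos: "0 < d j" if "j < s" for j
    unfolding d_def using M_pos that by (simp add: delta_pos)
  have mod_d: "N mod d j mod M j i = N mod M j i" if "i < L j" for i j
    unfolding d_def using M_dvd_delta[of i L j M, OF that] by (rule mod_mod_cancel)
  have stage1: "\<exists>K. stage1 L M rt kg j = Some K \<and> (\<forall>i<L j. K i = N mod d j div M j i)"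
    if j: "j < s" for j
  proof (rule stage1_correct)
    show "\<forall>i<L j. 4 * \<bar>rt j i - N mod d j mod M j i\<bar> < maxmin_gcd (L j) (M j)" if "2 \<le> L j"
      using err t_group j that mod_d by (smt (verit))
  qed (use L_pos M_pos kg_ref d_pos j in \<open>simp_all add: d_def\<close>)
  define K where "K j = the (stage1 L M rt kg j)" for j
  have K: "\<And>j. j < s \<Longrightarrow> stage1 L M rt kg j = Some (K j)"
      "\<And>j i. j < s \<Longrightarrow> i < L j \<Longrightarrow> K j i = N mod d j div M j i"
    unfolding K_def using stage1 by fastforce+
  define Nh where "Nh j = Nhat_group L M rt j (K j)" for j
  have "\<bar>Nh j - N mod d j\<bar> \<le> t j" if "j < s" for j
    unfolding Nh_def using L_pos K(2) err mod_d that by (intro Nhat_group_error) auto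
  then have "\<forall>j<s. 4 * \<bar>Nh j - N mod d j\<bar> < maxmin_gcd s d"
    using t_delta unfolding d_def by (smt (verit))
  moreover have "k0 < s"
    using k0_ref unfolding is_ref_index_def by blast
  ultimately obtain l where l: "alg_A s d k0 Nh = Some l" "\<forall>j<s. l j = N div d j"
    using alg_A_correct[of k0 s d] gcd_le_of_is_ref_index[OF k0_ref] d_pos N_range
    unfolding d_def by blast
  define nhat where "nhat j i = l j * d j div M j i + K j i" for j i
  have stage1_ok: "\<forall>j<s. stage1 L M rt kg j \<noteq> None"
    using K(1) by simp
  have "two_stage s L M rt kg k0 = Some nhat"
    using l(1) unfolding two_stage_def if_P[OF stage1_ok] Let_def nhat_def Nh_def d_def K_def by simp
  moreover have "nhat j i = N div M j i" if "j < s" "i < L j" for j i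
    unfolding nhat_def using l(2) K(2) that M_dvd_delta[of i L j M, OF that(2)]
    by (simp add: d_def div_mult_add_mod_div)
  ultimately show ?thesis
    by blast
qed

lemma mean_estimate_error:
  fixes nhat M rt :: "nat \<Rightarrow> nat \<Rightarrow> int" and N :: int
  assumes pos: "0 < (\<Sum>j<s. L j)"
    and nhat: "\<forall>j<s. \<forall>i<L j. nhat j i = N div M j i"
    and err: "\<forall>j<s. \<forall>i<L j. \<bar>real_of_int (rt j i - N mod M j i)\<bar> \<le> tau j"
  shows "\<bar>rnd ((\<Sum>j<s. \<Sum>i<L j. real_of_int (nhat j i * M j i + rt j i)) / real (\<Sum>j<s. L j)) - N\<bar>
    \<le> rnd ((\<Sum>j<s. real (L j) * tau j) / real (\<Sum>j<s. L j))"
proof -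
  define e where "e j i = real_of_int (rt j i - N mod M j i)" for j i
  define E where "E = (\<Sum>j<s. \<Sum>i<L j. e j i)"
  have "(\<Sum>j<s. \<Sum>i<L j. real_of_int (nhat j i * M j i + rt j i))
      = (\<Sum>j<s. \<Sum>i<L j. real_of_int N + e j i)"
    using nhat unfolding e_def by (intro sum.cong refl) (simp add: minus_mod_eq_div_mult[symmetric])
  also have "\<dots> = real (\<Sum>j<s. L j) * real_of_int N + E"
    unfolding E_def by (simp add: sum.distrib sum_distrib_right)
  finally have sum_eq: "(\<Sum>j<s. \<Sum>i<L j. real_of_int (nhat j i * M j i + rt j i))
      = real (\<Sum>j<s. L j) * real_of_int N + E" .
  have "\<bar>E\<bar> \<le> (\<Sum>j<s. \<bar>\<Sum>i<L j. e j i\<bar>)"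
    unfolding E_def by (rule sum_abs)
  also have "\<dots> \<le> (\<Sum>j<s. \<Sum>i<L j. \<bar>e j i\<bar>)"
    by (intro sum_mono sum_abs)
  also have "\<dots> \<le> (\<Sum>j<s. real (L j) * tau j)"
    using err unfolding e_def by (intro sum_mono order_trans[OF sum_bounded_above]) auto
  finally have "\<bar>E\<bar> \<le> (\<Sum>j<s. real (L j) * tau j)" .
  moreover have "0 < real (\<Sum>j<s. L j)"
    using pos by (simp only: of_nat_0_less_iff)
  ultimately show ?thesis
    unfolding sum_eq by (metis rnd_mean_error)
qed

theorem theorem3:
  fixes s :: nat and L :: "nat \<Rightarrow> nat" and M rt :: "nat \<Rightarrow> nat \<Rightarrow> int"
    and N :: int and tau :: "nat \<Rightarrow> real" and kg :: "nat \<Rightarrow> nat" and k0 :: nat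
  assumes s2: "s \<ge> 2"
    and L1: "\<forall>j<s. L j \<ge> 1"
    and Mpos: "\<forall>j<s. \<forall>i<L j. 0 < M j i"
    and Minc: "\<forall>j<s. \<forall>i i'. i < i' \<and> i' < L j \<longrightarrow> M j i < M j i'"
    and delta_dist: "\<forall>j<s. \<forall>j'<s. j \<noteq> j' \<longrightarrow> delta L M j \<noteq> delta L M j'"
    and N_range: "0 \<le> N" "N < Lcm (delta L M ` {..<s})"
    and rt_range: "\<forall>j<s. \<forall>i<L j. 0 \<le> rt j i \<and> rt j i \<le> M j i - 1"
    and rt_err: "\<forall>j<s. \<forall>i<L j. \<bar>real_of_int (rt j i - N mod M j i)\<bar> \<le> tau j"
    and tau_bound: "\<forall>j<s. tau j < min
        (if L j \<ge> 2 then real_of_int (maxmin_gcd (L j) (M j)) / 4 else real_of_int (M j 0) / 4)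
        (real_of_int (maxmin_gcd s (delta L M)) / 4)"
    and kg_ref: "\<forall>j<s. L j \<ge> 2 \<longrightarrow> is_ref_index (L j) (M j) (kg j)"
    and k0_ref: "is_ref_index s (delta L M) k0"
  shows "\<exists>nhat. two_stage s L M rt kg k0 = Some nhat
     \<and> (\<forall>j<s. \<forall>i<L j. nhat j i = (N - N mod M j i) div M j i)
     \<and> \<bar>rnd ((\<Sum>j<s. \<Sum>i<L j. real_of_int (nhat j i * M j i + rt j i))
              / real (\<Sum>j<s. L j)) - N\<bar>
       \<le> rnd ((\<Sum>j<s. real (L j) * tau j) / real (\<Sum>j<s. L j))"
proof -
  \<comment> \<open>The residue errors are integers, so
    tau j may be replaced by its floor; unlike rnd (tau j), that bound survives averaging
    within a group.\<close>
  have "\<forall>j<s. \<forall>i<L j. \<bar>rt j i - N mod M j i\<bar> \<le> \<lfloor>tau j\<rfloor>"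
    using rt_err by (simp add: le_floor_iff)
  moreover have "\<forall>j<s. 2 \<le> L j \<longrightarrow> 4 * \<lfloor>tau j\<rfloor> < maxmin_gcd (L j) (M j)"
    and "\<forall>j<s. 4 * \<lfloor>tau j\<rfloor> < maxmin_gcd s (delta L M)"
    using tau_bound by (auto intro!: floor_less_quarter simp del: of_int_floor_le)
  ultimately obtain nhat where run: "two_stage s L M rt kg k0 = Some nhat"
    and nhat: "\<forall>j<s. \<forall>i<L j. nhat j i = N div M j i"
    using two_stage_correct[OF L1 Mpos N_range, where t="\<lambda>j. \<lfloor>tau j\<rfloor>"] kg_ref k0_ref by blast
  have "\<forall>j<s. \<forall>i<L j. nhat j i = (N - N mod M j i) div M j i"
    using nhat Mpos by (simp add: minus_mod_eq_mult_div)
  moreover have "0 < (\<Sum>j<s. L j)"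
  proof -
    have "1 \<le> L 0" "L 0 \<le> (\<Sum>j<s. L j)"
      using L1 s2 by (auto intro: member_le_sum)
    then show ?thesis by linarith
  qed
  ultimately show ?thesis
    using run mean_estimate_error[OF _ nhat rt_err] by blast
qed

end
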